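(* Let $C$ be a cycle and $P$ a path (in some graph) such that $C\cup P$ is the exceptional graph. Then $C$ has length $5$, $V(C)\subseteq V(P)$, and the subgraph of $C\cup P$ induced by $V(C)$ is isomorphic to $K_5^-$.
   Context: $K_5^-$ is $K_5$ minus one edge. The exceptional graph is a graph that is the union of an edge-disjoint cycle $C_0$ of length $5$ and path $P_0$ such that $V(C_0)\subseteq V(P_0)$ and $V(C_0)$ induces a $K_5^-$ in $C_0\cup P_0$. "$C\cup P$ is the exceptional graph" means that the graph with edge set $E(C)\cup E(P)$ ($C,P$ edge-disjoint) is isomorphic to the exceptional graph. *)

theory Defs
  imports Main
begin

text \<open>Simple graphs given by a vertex set and a set of 2-element edges.\<close>
type_synonym 'a graph = "'a set \<times> 'a set set"

text \<open>A cycle is given by its cyclic sequence of distinct vertices (at least 3);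
its length is the number of vertices (= number of edges).\<close>
definition is_cycle :: "'a list \<Rightarrow> bool" where
  "is_cycle vs \<longleftrightarrow> distinct vs \<and> length vs \<ge> 3"

definition cyc_edges :: "'a list \<Rightarrow> 'a set set" where
  "cyc_edges vs = {{vs ! i, vs ! ((i + 1) mod length vs)} | i. i < length vs}"

definition is_path :: "'a list \<Rightarrow> bool" where
  "is_path vs \<longleftrightarrow> distinct vs \<and> vs \<noteq> []"

definition path_edges :: "'a list \<Rightarrow> 'a set set" where
  "path_edges vs = {{vs ! i, vs ! Suc i} | i. Suc i < length vs}"

definition graph_of :: "'a set set \<Rightarrow> 'a graph" where
  "graph_of E = (\<Union>E, E)"

definition induced :: "'a graph \<Rightarrow> 'a set \<Rightarrow> 'a graph" where
  "induced G S = (S, {e \<in> snd G. e \<subseteq> S})"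

definition graph_iso :: "'a graph \<Rightarrow> 'b graph \<Rightarrow> bool" where
  "graph_iso G H \<longleftrightarrow> (\<exists>f. bij_betw f (fst G) (fst H) \<and>
     (\<forall>x\<in>fst G. \<forall>y\<in>fst G. {x, y} \<in> snd G \<longleftrightarrow> {f x, f y} \<in> snd H))"

definition K5minus :: "nat graph" where
  "K5minus = ({0..4}, {{x, y} | x y. x \<in> {0..4} \<and> y \<in> {0..4} \<and> x \<noteq> y} - {{0, 1}})"

text \<open>An edge set E
"is the exceptional graph" if the graph with edge set E is isomorphic to it.\<close>
definition is_exceptional_graph :: "'a set set \<Rightarrow> bool" where
  "is_exceptional_graph E \<longleftrightarrow> (\<exists>(C0::nat list) P0.
     is_cycle C0 \<and> length C0 = 5 \<and> is_path P0 \<and>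
     cyc_edges C0 \<inter> path_edges P0 = {} \<and> set C0 \<subseteq> set P0 \<and>
     graph_iso (induced (graph_of (cyc_edges C0 \<union> path_edges P0)) (set C0)) K5minus \<and>
     graph_iso (graph_of E) (graph_of (cyc_edges C0 \<union> path_edges P0)))"

end

theory Submission
  imports Defs
begin

(* Under an isomorphism onto the exceptional graph, V(C0) pulls back to a set T of 5 vertices
   spanning 9 = 2|T| - 1 edges of C \<union> P.  Inside a vertex set T a cycle spans at most
   |T \<inter> V(C)| edges, and one fewer unless V(C) \<subseteq> T (some vertex of T on C is followed by
   one outside T), while a path spans at most |T \<inter> V(P)| - 1 edges.  So 2|T| - 1 edges can
   only be reached with V(C) = T \<subseteq> V(P), and then the subgraph induced by V(C) is the one
   induced by T, which is a K_5^-. *)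

definition wf_graph :: "'a graph \<Rightarrow> bool" where
  "wf_graph G \<longleftrightarrow> (\<forall>e\<in>snd G. \<exists>x\<in>fst G. \<exists>y\<in>fst G. e = {x, y})"

lemma graph_iso_trans:
  assumes "graph_iso G H" "graph_iso H K"
  shows "graph_iso G K"
proof -
  obtain f where f: "bij_betw f (fst G) (fst H)"
    "\<forall>x\<in>fst G. \<forall>y\<in>fst G. {x, y} \<in> snd G \<longleftrightarrow> {f x, f y} \<in> snd H"
    using assms(1) unfolding graph_iso_def by blast
  obtain g where g: "bij_betw g (fst H) (fst K)"
    "\<forall>x\<in>fst H. \<forall>y\<in>fst H. {x, y} \<in> snd H \<longleftrightarrow> {g x, g y} \<in> snd K"
    using assms(2) unfolding graph_iso_def by blast
  have "bij_betw (g \<circ> f) (fst G) (fst K)"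
    using f(1) g(1) by (rule bij_betw_trans)
  moreover have "{x, y} \<in> snd G \<longleftrightarrow> {(g \<circ> f) x, (g \<circ> f) y} \<in> snd K"
    if "x \<in> fst G" "y \<in> fst G" for x y
  proof -
    have "f x \<in> fst H" "f y \<in> fst H"
      using that f(1) bij_betwE by blast+
    then show ?thesis
      using that f(2) g(2) by simp
  qed
  ultimately show ?thesis
    unfolding graph_iso_def by blast
qed

lemma graph_iso_card_edges:
  assumes "graph_iso G H" "wf_graph G" "wf_graph H"
  shows "card (snd G) = card (snd H)"
proof -
  obtain f where bij: "bij_betw f (fst G) (fst H)"
    and adj: "\<forall>x\<in>fst G. \<forall>y\<in>fst G. {x, y} \<in> snd G \<longleftrightarrow> {f x, f y} \<in> snd H"
    using assms(1) unfolding graph_iso_def by blast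
  have "snd G \<subseteq> Pow (fst G)"
    using assms(2) unfolding wf_graph_def by auto
  then have "inj_on (image f) (snd G)"
    by (meson bij bij_betw_imp_inj_on inj_on_image_Pow inj_on_subset)
  moreover have "image f ` snd G \<subseteq> snd H"
    using assms(2) adj unfolding wf_graph_def by auto
  moreover have "snd H \<subseteq> image f ` snd G"
  proof
    fix e assume "e \<in> snd H"
    then obtain a b where ab: "a \<in> fst H" "b \<in> fst H" "e = {a, b}"
      using assms(3) unfolding wf_graph_def by auto
    then obtain x y where "x \<in> fst G" "y \<in> fst G" "a = f x" "b = f y"
      using bij unfolding bij_betw_def by (metis imageE)
    then have "{x, y} \<in> snd G" and "e = f ` {x, y}"
      using adj ab \<open>e \<in> snd H\<close> by auto
    then show "e \<in> image f ` snd G"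
      by (rule rev_image_eqI)
  qed
  ultimately show ?thesis
    by (metis card_image subset_antisym)
qed

lemma graph_iso_induced_preimage:
  assumes "graph_iso G H" "S \<subseteq> fst H"
  obtains T where "card T = card S" "graph_iso (induced G T) (induced H S)"
proof -
  obtain f where bij: "bij_betw f (fst G) (fst H)"
    and adj: "\<forall>x\<in>fst G. \<forall>y\<in>fst G. {x, y} \<in> snd G \<longleftrightarrow> {f x, f y} \<in> snd H"
    using assms(1) unfolding graph_iso_def by blast
  let ?T = "{x \<in> fst G. f x \<in> S}"
  have bij_T: "bij_betw f ?T S"
    using bij assms(2) unfolding bij_betw_def inj_on_def by auto
  then have "graph_iso (induced G ?T) (induced H S)"
    using adj unfolding graph_iso_def induced_def by auto
  then show thesis
    using that bij_betw_same_card[OF bij_T] by blast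
qed

lemma wf_graph_induced_graph_of:
  assumes "\<forall>e\<in>E. \<exists>x y. e = {x, y}"
  shows "wf_graph (induced (graph_of E) T)"
proof -
  have "\<exists>x\<in>T. \<exists>y\<in>T. e = {x, y}" if "e \<in> E" "e \<subseteq> T" for e
    using assms that by (metis insert_subset)
  then show ?thesis
    unfolding wf_graph_def induced_def graph_of_def by auto
qed

lemma wf_graph_K5minus: "wf_graph K5minus"
  unfolding wf_graph_def
proof
  fix e assume "e \<in> snd K5minus"
  then obtain x y where "x \<in> fst K5minus" "y \<in> fst K5minus" "e = {x, y}"
    unfolding K5minus_def by auto
  then show "\<exists>x\<in>fst K5minus. \<exists>y\<in>fst K5minus. e = {x, y}"
    by blast
qed

lemma card_K5minus_edges: "card (snd K5minus) = 9"
proof -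
  let ?K5 = "{{x, y} |x y. x \<in> {0..4} \<and> y \<in> {0..4::nat} \<and> x \<noteq> y}"
  have "?K5 = {A. A \<subseteq> {0..4} \<and> card A = 2}"
    by (auto simp: card_2_iff) blast
  then have "card ?K5 = 5 choose 2"
    by (simp add: n_subsets)
  also have "\<dots> = 10"
    by (simp add: numeral_eq_Suc)
  finally have "card ?K5 = 10" .
  moreover have "{0, 1} \<in> ?K5"
    by force
  ultimately show ?thesis
    unfolding K5minus_def snd_conv by (simp add: card_Diff_singleton)
qed

lemma set_subset_Union_cyc_edges: "set vs \<subseteq> \<Union>(cyc_edges vs)"
proof
  fix v assume "v \<in> set vs"
  then obtain i where "i < length vs" "v = vs ! i"
    by (metis in_set_conv_nth)
  then have "{vs ! i, vs ! ((i + 1) mod length vs)} \<in> cyc_edges vs"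
    unfolding cyc_edges_def by blast
  then show "v \<in> \<Union>(cyc_edges vs)"
    using \<open>v = vs ! i\<close> by blast
qed

lemma card_cyc_edges_within_le_length: "card {e \<in> cyc_edges vs. e \<subseteq> T} \<le> length vs"
proof -
  have "{e \<in> cyc_edges vs. e \<subseteq> T} \<subseteq> (\<lambda>i. {vs ! i, vs ! ((i + 1) mod length vs)}) ` {..<length vs}"
    unfolding cyc_edges_def by auto
  then show ?thesis
    using surj_card_le[of "{..<length vs}"] by simp
qed

lemma card_indices_less_card_Int_set:
  assumes "distinct vs" "\<forall>i\<in>I. i < length vs \<and> vs ! i \<in> T"
    and "k < length vs" "vs ! k \<in> T" "k \<notin> I"
  shows "card I < card (T \<inter> set vs)"
proof -
  have "inj_on (\<lambda>i. vs ! i) I"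
    using assms(1,2) unfolding inj_on_def by (simp add: nth_eq_iff_index_eq)
  moreover have "vs ! k \<notin> (\<lambda>i. vs ! i) ` I"
    using assms by (auto simp: nth_eq_iff_index_eq)
  then have "(\<lambda>i. vs ! i) ` I \<subset> T \<inter> set vs"
    using assms by auto
  ultimately show ?thesis
    by (metis card_image finite_Int finite_set psubset_card_mono)
qed

lemma card_path_edges_within:
  assumes "distinct P"
  shows "card {e \<in> path_edges P. e \<subseteq> T} \<le> card (T \<inter> set P) - 1"
proof -
  define I where "I = {i. Suc i < length P \<and> P ! i \<in> T \<and> P ! Suc i \<in> T}"
  have "finite I"
    unfolding I_def by (rule finite_subset[of _ "{..<length P}"]) auto
  have "{e \<in> path_edges P. e \<subseteq> T} \<subseteq> (\<lambda>i. {P ! i, P ! Suc i}) ` I"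
    unfolding path_edges_def I_def by auto
  then have "card {e \<in> path_edges P. e \<subseteq> T} \<le> card I"
    using \<open>finite I\<close> by (rule surj_card_le[rotated])
  moreover have "card I < card (T \<inter> set P)" if "I \<noteq> {}"
  proof -
    have "Max I \<in> I"
      using \<open>finite I\<close> that by simp
    moreover have "Suc (Max I) \<notin> I"
      using \<open>finite I\<close> Max_ge Suc_n_not_le_n by blast
    ultimately show ?thesis
      using card_indices_less_card_Int_set[OF assms, of I T "Suc (Max I)"] unfolding I_def by auto
  qed
  ultimately show ?thesis
    by fastforce
qed

lemma cyc_exit_index:
  assumes "j < length vs" "vs ! j \<in> T" "\<not> set vs \<subseteq> T"
  shows "\<exists>i < length vs. vs ! i \<in> T \<and> vs ! ((i + 1) mod length vs) \<notin> T"
proof (rule ccontr)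
  let ?n = "length vs"
  assume "\<not> ?thesis"
  then have step: "vs ! ((i + 1) mod ?n) \<in> T" if "i < ?n" "vs ! i \<in> T" for i
    using that by blast
  have reach: "vs ! ((j + m) mod ?n) \<in> T" for m
  proof (induction m)
    case 0
    then show ?case using assms by simp
  next
    case (Suc m)
    have "(j + Suc m) mod ?n = ((j + m) mod ?n + 1) mod ?n"
      by (simp add: mod_Suc_eq)
    moreover have "(j + m) mod ?n < ?n"
      using assms(1) by (intro mod_less_divisor) linarith
    ultimately show ?case
      using step Suc by metis
  qed
  obtain k where "k < ?n" "vs ! k \<notin> T"
    using assms(3) by (metis in_set_conv_nth subsetI)
  moreover have "(j + (k + ?n - j)) mod ?n = k"
    using assms(1) \<open>k < ?n\<close> by simp
  ultimately show False
    using reach[of "k + ?n - j"] by simp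
qed

lemma card_cyc_edges_within_not_subset:
  assumes "distinct C" "\<not> set C \<subseteq> T"
  shows "card {e \<in> cyc_edges C. e \<subseteq> T} \<le> card (T \<inter> set C) - 1"
proof -
  let ?n = "length C"
  define I where "I = {i. i < ?n \<and> C ! i \<in> T \<and> C ! ((i + 1) mod ?n) \<in> T}"
  have "finite I"
    unfolding I_def by (rule finite_subset[of _ "{..<?n}"]) auto
  have "{e \<in> cyc_edges C. e \<subseteq> T} \<subseteq> (\<lambda>i. {C ! i, C ! ((i + 1) mod ?n)}) ` I"
    unfolding cyc_edges_def I_def by auto
  then have "card {e \<in> cyc_edges C. e \<subseteq> T} \<le> card I"
    using \<open>finite I\<close> by (rule surj_card_le[rotated])
  moreover have "card I < card (T \<inter> set C)" if "I \<noteq> {}"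
  proof -
    obtain j where "j < ?n" "C ! j \<in> T"
      using \<open>I \<noteq> {}\<close> unfolding I_def by blast
    then obtain i where "i < ?n" "C ! i \<in> T" "C ! ((i + 1) mod ?n) \<notin> T"
      using cyc_exit_index assms(2) by metis
    then show ?thesis
      using card_indices_less_card_Int_set[OF assms(1), of I T i] unfolding I_def by auto
  qed
  ultimately show ?thesis
    by fastforce
qed

lemma cycle_path_dense_set:
  assumes "distinct C" "distinct P" "2 \<le> card T"
    and dense: "2 * card T \<le> card {e \<in> cyc_edges C \<union> path_edges P. e \<subseteq> T} + 1"
  shows "set C = T \<and> T \<subseteq> set P"
proof -
  have "finite T"
    using assms(3) card.infinite by fastforce
  let ?cyc = "card {e \<in> cyc_edges C. e \<subseteq> T}"
  let ?path = "card {e \<in> path_edges P. e \<subseteq> T}"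
  have "{e \<in> cyc_edges C \<union> path_edges P. e \<subseteq> T} =
      {e \<in> cyc_edges C. e \<subseteq> T} \<union> {e \<in> path_edges P. e \<subseteq> T}"
    by auto
  then have "card {e \<in> cyc_edges C \<union> path_edges P. e \<subseteq> T} \<le> ?cyc + ?path"
    by (simp add: card_Un_le)
  then have split: "2 * card T \<le> ?cyc + ?path + 1"
    using dense by linarith
  have path: "?path \<le> card (T \<inter> set P) - 1"
    using card_path_edges_within[OF assms(2)] .
  have TP: "card (T \<inter> set P) \<le> card T" and TC: "card (T \<inter> set C) \<le> card T"
    using \<open>finite T\<close> by (simp_all add: card_mono)
  have "set C \<subseteq> T"
  proof (rule ccontr)
    assume "\<not> set C \<subseteq> T"
    then have "?cyc \<le> card (T \<inter> set C) - 1"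
      using card_cyc_edges_within_not_subset[OF assms(1)] by blast
    then show False
      using split path TP TC assms(3) by linarith
  qed
  have "?cyc \<le> card (set C)"
    using card_cyc_edges_within_le_length[of C T] distinct_card[OF assms(1)] by simp
  have "card (set C) \<le> card T"
    using \<open>set C \<subseteq> T\<close> \<open>finite T\<close> by (rule card_mono[rotated])
  then have "card (set C) = card T" and "card (T \<inter> set P) = card T"
    using split path TP assms(3) \<open>?cyc \<le> card (set C)\<close> by linarith+
  moreover have "T \<inter> set P \<subseteq> T"
    by blast
  ultimately have "set C = T" and "T \<inter> set P = T"
    using \<open>set C \<subseteq> T\<close> \<open>finite T\<close> card_subset_eq by metis+
  then show ?thesis
    by blast
qed

theorem mainTheorem7:
  fixes C P :: "'a list"
  assumes "is_cycle C" and "is_path P"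
    and "cyc_edges C \<inter> path_edges P = {}"
    and "is_exceptional_graph (cyc_edges C \<union> path_edges P)"
  shows "length C = 5 \<and> set C \<subseteq> set P \<and>
    graph_iso (induced (graph_of (cyc_edges C \<union> path_edges P)) (set C)) K5minus"
proof -
  let ?E = "cyc_edges C \<union> path_edges P"
  obtain C0 :: "nat list" and P0 where C0: "is_cycle C0" "length C0 = 5"
    and K: "graph_iso (induced (graph_of (cyc_edges C0 \<union> path_edges P0)) (set C0)) K5minus"
    and iso: "graph_iso (graph_of ?E) (graph_of (cyc_edges C0 \<union> path_edges P0))"
    using assms(4) unfolding is_exceptional_graph_def by blast
  have "set C0 \<subseteq> fst (graph_of (cyc_edges C0 \<union> path_edges P0))"
    using set_subset_Union_cyc_edges[of C0] unfolding graph_of_def by auto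
  then obtain T where "card T = 5" and "graph_iso (induced (graph_of ?E) T) K5minus"
    using graph_iso_induced_preimage[OF iso] graph_iso_trans[OF _ K] C0 distinct_card
    unfolding is_cycle_def by metis
  moreover have "wf_graph (induced (graph_of ?E) T)"
    by (rule wf_graph_induced_graph_of) (auto simp: cyc_edges_def path_edges_def)
  ultimately have "card {e \<in> ?E. e \<subseteq> T} = 9"
    using graph_iso_card_edges wf_graph_K5minus card_K5minus_edges
    unfolding induced_def graph_of_def by fastforce
  then have "set C = T \<and> T \<subseteq> set P"
    using assms(1,2) \<open>card T = 5\<close> unfolding is_cycle_def is_path_def
    by (intro cycle_path_dense_set) auto
  then show ?thesis
    using \<open>card T = 5\<close> \<open>graph_iso (induced (graph_of ?E) T) K5minus\<close> assms(1)
    unfolding is_cycle_def by (metis distinct_card)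
qed

end
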